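(* Let $W\in\{\mathrm{A}_{\frac12\infty},\mathrm{D}_{\frac12\infty}\}$ and $X_{W,t}=f_W^{-1}(t)\subset\mathbb{C}^2$. Then the restriction $f_W:\mathbb{C}^2\setminus(X_{W,0}\cup X_{W,1})\to\mathbb{C}\setminus\{0,1\}$ is a topologically locally trivial fibration.
   Context: Let $s(x)=\frac{\sin\sqrt{x}}{\sqrt{x}}$ and $c(x)=\cos\sqrt{x}$ (entire functions of $x$). Define $f_{\mathrm{A}_{\frac12\infty}}(x,y)=xs(x)^2-y^2=1-c(x)^2-y^2$ and $f_{\mathrm{D}_{\frac12\infty}}(x,y)=xs(x)^2-xy^2=1-c(x)^2-xy^2$ on $\mathbb{C}^2$. *)

theory Defs
  imports "HOL-Analysis.Analysis"
begin

text \<open>s(x) = sin(sqrt x)/sqrt x, extended by its limit 1 at x = 0 (entire; independent of the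
  branch of the square root since sin(z)/z is even).\<close>
definition s_fun :: "complex \<Rightarrow> complex" where
  "s_fun x = (if x = 0 then 1 else sin (csqrt x) / csqrt x)"

text \<open>c(x) = cos(sqrt x) (independent of the branch since cos is even).\<close>
definition c_fun :: "complex \<Rightarrow> complex" where
  "c_fun x = cos (csqrt x)"

definition f_A :: "complex \<times> complex \<Rightarrow> complex" where
  "f_A p = fst p * (s_fun (fst p))\<^sup>2 - (snd p)\<^sup>2"

definition f_D :: "complex \<times> complex \<Rightarrow> complex" where
  "f_D p = fst p * (s_fun (fst p))\<^sup>2 - fst p * (snd p)\<^sup>2"

text \<open>The typical fibre F is taken as a subspace of the ambient space of E
  (any fibre is a subspace of E, so this is no restriction).\<close>
definition locally_trivial_fibration ::
  "('a::topological_space \<Rightarrow> 'b::topological_space) \<Rightarrow> 'a set \<Rightarrow> 'b set \<Rightarrow> bool" where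
  "locally_trivial_fibration f E B \<longleftrightarrow>
     f ` E \<subseteq> B \<and> continuous_on E f \<and>
     (\<forall>b\<in>B. \<exists>U (F::'a set) h k.
        openin (top_of_set B) U \<and> b \<in> U \<and>
        homeomorphism {p \<in> E. f p \<in> U} (U \<times> F) h k \<and>
        (\<forall>p \<in> {p \<in> E. f p \<in> U}. fst (h p) = f p))"

end

theory Submission
  imports Defs "HOL-Complex_Analysis.Complex_Analysis"
begin

text \<open>Write \<open>f (x, y) = sin\<^sup>2 (sqrt x) - x\<^sup>k y\<^sup>2\<close>, with \<open>k = 0\<close> for \<open>A\<close> and \<open>k = 1\<close> for \<open>D\<close>.
  Given \<open>t\<^sub>0 \<notin> {0, 1}\<close>, choose \<open>b\<close> with \<open>sin\<^sup>2 b = t\<^sub>0\<close>, so that neither \<open>b\<close> nor \<open>2 b\<close> lies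
  in \<open>\<pi>\<int>\<close>. For small \<open>d\<close>, the map \<open>\<rho>\<^sub>d z = z + \<chi> z \<cdot> d\<close>, with a Lipschitz bump \<open>\<chi>\<close> that
  is \<open>1\<close> near \<open>b + \<pi>\<int>\<close>, \<open>-1\<close> near \<open>-b + \<pi>\<int>\<close> and \<open>0\<close> near \<open>0\<close>, is an odd homeomorphism of
  \<open>\<complex>\<close> carrying the zeros of \<open>sin (z \<mp> b)\<close> onto those of \<open>sin (w \<mp> (b + d))\<close>. Hence
  \<open>sin\<^sup>2 (\<rho>\<^sub>d z) - sin\<^sup>2 (b + d) = A\<^sub>d z \<cdot> A\<^sub>d (-z) \<cdot> (sin\<^sup>2 z - sin\<^sup>2 b)\<close> with \<open>A\<^sub>d\<close> continuous
  and close to \<open>1\<close>, and with \<open>z = sqrt x\<close> the map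
  \<open>\<Theta>\<^sub>d (x, y) = (\<rho>\<^sub>d z\<^sup>2, y \<cdot> sqrt (A\<^sub>d z \<cdot> A\<^sub>d (-z)) \<cdot> (z / \<rho>\<^sub>d z)\<^sup>k)\<close>
  is a homeomorphism of \<open>\<complex>\<^sup>2\<close> with \<open>f (\<Theta>\<^sub>d p) - sin\<^sup>2 (b + d) = A\<^sub>d z \<cdot> A\<^sub>d (-z) \<cdot> (f p - t\<^sub>0)\<close>:
  it carries the fibre over \<open>t\<^sub>0\<close> onto the fibre over \<open>sin\<^sup>2 (b + d)\<close>. Choosing \<open>d = d(t)\<close>
  continuously with \<open>sin\<^sup>2 (b + d(t)) = t\<close>, by a local inverse of \<open>sin\<^sup>2\<close> at \<open>b\<close>, the maps
  \<open>\<Theta>\<^bsub>d(t)\<^esub>\<close> trivialise \<open>f\<close> near \<open>t\<^sub>0\<close>.\<close>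

lemma locally_trivial_fibrationI:
  fixes f :: "'a::topological_space \<Rightarrow> 'b::topological_space"
  assumes cont: "continuous_on (f -` B) f"
    and transport: "\<And>t0. t0 \<in> B \<Longrightarrow> \<exists>U T T'. open U \<and> t0 \<in> U \<and> U \<subseteq> B \<and>
        continuous_on (U \<times> UNIV) (\<lambda>q. T (fst q) (snd q)) \<and>
        continuous_on (U \<times> UNIV) (\<lambda>q. T' (fst q) (snd q)) \<and>
        (\<forall>t\<in>U. \<forall>p. T t (T' t p) = p \<and> T' t (T t p) = p \<and> (f (T t p) = t \<longleftrightarrow> f p = t0))"
  shows "locally_trivial_fibration f (f -` B) B"
  unfolding locally_trivial_fibration_def
proof (intro conjI ballI)
  show "f ` (f -` B) \<subseteq> B" by auto
  show "continuous_on (f -` B) f" by (rule cont)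
  fix t0 assume "t0 \<in> B"
  then obtain U T T' where U: "open U" "t0 \<in> U" "U \<subseteq> B"
    and T: "continuous_on (U \<times> UNIV) (\<lambda>q. T (fst q) (snd q))"
    and T': "continuous_on (U \<times> UNIV) (\<lambda>q. T' (fst q) (snd q))"
    and props: "\<forall>t\<in>U. \<forall>p. T t (T' t p) = p \<and> T' t (T t p) = p \<and> (f (T t p) = t \<longleftrightarrow> f p = t0)"
    using transport[OF \<open>t0 \<in> B\<close>] by (elim exE conjE) (rule that, assumption+)
  have inv: "\<And>t p. t \<in> U \<Longrightarrow> T t (T' t p) = p" "\<And>t p. t \<in> U \<Longrightarrow> T' t (T t p) = p"
    and fibre: "\<And>t p. t \<in> U \<Longrightarrow> f (T t p) = t \<longleftrightarrow> f p = t0"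
    using props by simp_all
  have T_fibre: "f (T t p) = t" if "t \<in> U" "f p = t0" for t p
    using fibre that by blast
  define S where "S = {p \<in> f -` B. f p \<in> U}"
  define h where "h p = (f p, T' (f p) p)" for p
  have hom: "homeomorphism S (U \<times> f -` {t0}) h (\<lambda>q. T (fst q) (snd q))"
  proof
    have "continuous_on S (\<lambda>p. (f p, p))"
      by (intro continuous_intros continuous_on_subset[OF cont]) (auto simp: S_def)
    moreover have "(\<lambda>p. (f p, p)) ` S \<subseteq> U \<times> UNIV" by (auto simp: S_def)
    ultimately have "continuous_on S (\<lambda>p. T' (fst (f p, p)) (snd (f p, p)))"
      by (rule continuous_on_compose2[OF T'])
    then show "continuous_on S h"
      unfolding h_def by (intro continuous_intros continuous_on_subset[OF cont]) (auto simp: S_def)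
    show "continuous_on (U \<times> f -` {t0}) (\<lambda>q. T (fst q) (snd q))"
      by (rule continuous_on_subset[OF T]) auto
    show "h ` S \<subseteq> U \<times> f -` {t0}"
      using fibre inv(1) by (force simp: S_def h_def)
    show "(\<lambda>q. T (fst q) (snd q)) ` (U \<times> f -` {t0}) \<subseteq> S"
      using T_fibre U(3) by (auto simp: S_def)
    show "T (fst (h p)) (snd (h p)) = p" if "p \<in> S" for p
      using that inv(1) by (simp add: S_def h_def)
    show "h (T (fst q) (snd q)) = q" if "q \<in> U \<times> f -` {t0}" for q
      using that T_fibre inv(2) by (auto simp: h_def)
  qed
  show "\<exists>U (F::'a set) h k. openin (top_of_set B) U \<and> t0 \<in> U \<and>
      homeomorphism {p \<in> f -` B. f p \<in> U} (U \<times> F) h k \<and> (\<forall>p\<in>{p \<in> f -` B. f p \<in> U}. fst (h p) = f p)"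
  proof (intro exI conjI)
    show "openin (top_of_set B) U" using U by (simp add: open_subset)
    show "homeomorphism {p \<in> f -` B. f p \<in> U} (U \<times> f -` {t0}) h (\<lambda>q. T (fst q) (snd q))"
      using hom by (simp add: S_def)
  qed (simp_all add: U h_def)
qed

section \<open>The sine function\<close>

definition sin_zeros :: "complex set" where "sin_zeros = {z. sin z = 0}"

lemma closed_sin_zeros: "closed sin_zeros"
  unfolding sin_zeros_def by (intro closed_Collect_eq continuous_intros)

lemma sin_zeros_nonempty: "sin_zeros \<noteq> {}"
  by (auto simp: sin_zeros_def intro: exI[of _ 0])

lemma diff_in_sin_zeros: "u \<in> sin_zeros \<Longrightarrow> v \<in> sin_zeros \<Longrightarrow> u - v \<in> sin_zeros"
  by (simp add: sin_zeros_def sin_diff)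

lemma of_int_pi_in_sin_zeros: "of_int k * of_real pi \<in> sin_zeros"
  unfolding sin_zeros_def by (simp add: sin_int_times_real) (use sin_zero_iff_int2 in blast)

lemma infdist_uminus_sin_zeros: "infdist (- w) sin_zeros = infdist w sin_zeros"
proof -
  have "uminus ` sin_zeros = sin_zeros"
    by (force simp: sin_zeros_def image_iff intro: exI[of _ "- _"])
  then have "infdist (- w) sin_zeros = infdist (- w) (uminus ` sin_zeros)" by simp
  also have "\<dots> = infdist w sin_zeros" by (simp add: infdist_def image_image dist_minus)
  finally show ?thesis .
qed

lemma half_le_sin: "0 \<le> x \<Longrightarrow> x \<le> pi/3 \<Longrightarrow> x/2 \<le> sin (x::real)"
proof -
  assume x: "0 \<le> x" "x \<le> pi/3"
  have "sin 0 - 0/2 \<le> sin x - x/2"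
  proof (rule DERIV_nonneg_imp_nondecreasing[OF x(1)])
    fix u assume u: "0 \<le> u" "u \<le> x"
    have "cos (pi/3) \<le> cos u" using x u by (intro cos_monotone_0_pi_le) auto
    then show "\<exists>y. ((\<lambda>x. sin x - x/2) has_real_derivative y) (at u) \<and> 0 \<le> y"
      by (auto simp: cos_60 intro!: derivative_eq_intros)
  qed
  then show ?thesis by simp
qed

lemma half_le_abs_sin:
  assumes "0 \<le> \<rho>" "\<rho> \<le> 1" "\<rho> \<le> \<bar>u\<bar>" "\<bar>u\<bar> \<le> pi/2"
  shows "\<rho>/2 \<le> \<bar>sin (u::real)\<bar>"
proof -
  have "\<rho> \<le> pi/3" using assms pi_gt3 by linarith
  then have "\<rho>/2 \<le> sin \<rho>" using half_le_sin assms(1) by blast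
  also have "\<dots> \<le> sin \<bar>u\<bar>" by (rule sin_monotone_2pi_le) (use assms in auto)
  also have "\<dots> = \<bar>sin u\<bar>" using assms sin_ge_zero[of "\<bar>u\<bar>"] by (cases "u \<ge> 0") auto
  finally show ?thesis .
qed

lemma norm_sin_squared_ge: "(Im w)\<^sup>2 / 2 + (sin (Re w))\<^sup>2 \<le> (norm (sin w))\<^sup>2"
proof -
  define y where "y = \<bar>2 * Im w\<bar>"
  have "2 + y\<^sup>2 / 2 \<le> exp y + exp (- y)"
    using exp_lower_Taylor_quadratic[of y] exp_ge_add_one_self[of "- y"] by (simp add: y_def)
  also have "exp y + exp (- y) = exp (2 * Im w) + inverse (exp (2 * Im w))"
    by (cases "Im w \<ge> 0") (auto simp: y_def exp_minus)
  finally show ?thesis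
    by (simp add: norm_sin_squared cos_double_sin y_def power_mult_distrib)
qed

lemma norm_sin_ge_infdist:
  assumes "0 < \<rho>" "\<rho> \<le> 1" "\<rho> \<le> infdist w sin_zeros"
  shows "\<rho>/4 \<le> norm (sin w)"
proof -
  define k where "k = \<lfloor>Re w / pi + 1/2\<rfloor>"
  define u where "u = Re w - of_int k * pi"
  have "of_int k \<le> Re w / pi + 1/2" "Re w / pi + 1/2 \<le> of_int k + 1"
    unfolding k_def by linarith+
  then have "of_int k * pi \<le> Re w + pi/2" "Re w - pi/2 \<le> of_int k * pi"
    by (simp_all add: field_simps)
  then have u_le: "\<bar>u\<bar> \<le> pi/2" unfolding u_def by linarith
  have sin_u: "(sin u)\<^sup>2 = (sin (Re w))\<^sup>2"
  proof -
    have "sin (of_int k * pi) = 0" by (auto simp: sin_zero_iff_int2)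
    then show ?thesis
      by (simp add: u_def sin_diff power_mult_distrib cos_squared_eq)
  qed
  have "\<rho> \<le> dist w (of_int k * of_real pi)"
    using assms(3) infdist_le[OF of_int_pi_in_sin_zeros, of w k] by linarith
  also have "w - of_int k * of_real pi = Complex u (Im w)"
    by (simp add: u_def complex_eq_iff)
  then have "dist w (of_int k * of_real pi) = norm (Complex u (Im w))"
    by (simp add: dist_norm)
  finally have "\<rho>\<^sup>2 \<le> u\<^sup>2 + (Im w)\<^sup>2"
    using assms(1) power_mono[of \<rho> "norm (Complex u (Im w))" 2] by (simp add: cmod_power2)
  then have "\<rho>\<^sup>2 / 4 \<le> (Im w)\<^sup>2 \<or> \<rho>\<^sup>2 / 4 \<le> u\<^sup>2"
    using zero_le_power2[of \<rho>] by linarith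
  then have "(\<rho>/2)\<^sup>2 \<le> (Im w)\<^sup>2 \<or> (\<rho>/2)\<^sup>2 \<le> u\<^sup>2"
    by (simp add: power_divide)
  then have "(\<rho>/4)\<^sup>2 \<le> (norm (sin w))\<^sup>2"
  proof
    assume "(\<rho>/2)\<^sup>2 \<le> (Im w)\<^sup>2"
    moreover have "(\<rho>/4)\<^sup>2 = (\<rho>/2)\<^sup>2 / 4" by (simp add: power_divide)
    ultimately show ?thesis
      using norm_sin_squared_ge[of w] zero_le_power2[of "sin (Re w)"] zero_le_power2[of "Im w"]
      by linarith
  next
    assume "(\<rho>/2)\<^sup>2 \<le> u\<^sup>2"
    then have "\<rho>/2 \<le> \<bar>u\<bar>" using abs_le_square_iff[of "\<rho>/2" u] assms(1) by simp
    then have "\<rho>/4 \<le> \<bar>sin u\<bar>"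
      using half_le_abs_sin[of "\<rho>/2" u] u_le assms by simp
    then have "(\<rho>/4)\<^sup>2 \<le> (sin u)\<^sup>2"
      using assms(1) power_mono[of "\<rho>/4" "\<bar>sin u\<bar>" 2] by simp
    then show ?thesis using norm_sin_squared_ge[of w] sin_u zero_le_power2[of "Im w"] by linarith
  qed
  then show ?thesis by (rule power2_le_imp_le) simp
qed

lemma sin_squared_diff: "(sin (u::complex))\<^sup>2 - (sin v)\<^sup>2 = sin (u - v) * sin (u + v)"
proof -
  have "sin (u - v) * sin (u + v) = (sin u * cos v)\<^sup>2 - (cos u * sin v)\<^sup>2"
    by (simp add: sin_diff sin_add power2_eq_square algebra_simps)
  also have "\<dots> = (sin u)\<^sup>2 - (sin v)\<^sup>2"
    by (simp add: power_mult_distrib cos_squared_eq algebra_simps)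
  finally show ?thesis by simp
qed

lemma norm_cos_le: "norm (cos (w::complex)) \<le> 1 + norm (sin w)"
proof -
  have "(norm (cos w))\<^sup>2 = norm (1 - (sin w)\<^sup>2)" by (simp add: cos_squared_eq flip: norm_power)
  also have "\<dots> \<le> 1 + (norm (sin w))\<^sup>2" by (metis norm_one norm_power norm_triangle_ineq4)
  also have "\<dots> \<le> (1 + norm (sin w))\<^sup>2" by (simp add: power2_eq_square algebra_simps)
  finally show ?thesis by (rule power2_le_imp_le) simp
qed

lemma norm_sin_add_div_sin_minus_1_le:
  fixes w e :: complex
  assumes "0 < c" "c \<le> norm (sin w)"
  shows "norm (sin (w + e) / sin w - 1) \<le> norm (cos e - 1) + (1 + 1/c) * norm (sin e)"
proof -
  have sin_w: "sin w \<noteq> 0" using assms by auto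
  have "norm (cos w / sin w) \<le> (1 + norm (sin w)) / norm (sin w)"
    unfolding norm_divide by (rule divide_right_mono[OF norm_cos_le]) simp
  also have "\<dots> = 1 + 1 / norm (sin w)" using sin_w by (simp add: field_simps)
  also have "\<dots> \<le> 1 + 1/c" using assms by (simp add: frac_le)
  finally have "norm (cos w / sin w * sin e) \<le> (1 + 1/c) * norm (sin e)"
    unfolding norm_mult by (rule mult_right_mono) simp
  moreover have "sin (w + e) / sin w - 1 = (cos e - 1) + cos w / sin w * sin e"
    using sin_w by (simp add: sin_add field_simps)
  ultimately show ?thesis
    by (metis add_left_mono norm_triangle_ineq order_trans)
qed

lemma sin_squared_local_inverse:
  fixes b :: complex
  assumes "sin b * cos b \<noteq> 0" "0 < \<epsilon>"
  obtains U g where "open U" "(sin b)\<^sup>2 \<in> U" "continuous_on U g"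
    "\<And>t. t \<in> U \<Longrightarrow> dist (g t) b < \<epsilon> \<and> (sin (g t))\<^sup>2 = t"
proof -
  define q where "q z = (sin z)\<^sup>2" for z :: complex
  have hol: "q holomorphic_on UNIV" unfolding q_def by (intro holomorphic_intros)
  have "(q has_field_derivative 2 * sin b * cos b) (at b)"
    unfolding q_def by (auto intro!: derivative_eq_intros)
  then have "deriv q b \<noteq> 0" using assms(1) by (simp add: DERIV_imp_deriv)
  then obtain r where "r > 0" "inj_on q (ball b r)"
    using has_complex_derivative_locally_injective[OF hol _ open_UNIV] by blast
  define V where "V = ball b (min r \<epsilon>)"
  have V: "open V" "inj_on q V" "b \<in> V"
    using \<open>r > 0\<close> \<open>inj_on q (ball b r)\<close> assms(2) by (auto simp: V_def intro: inj_on_subset)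
  have hol_V: "q holomorphic_on V" using hol by (rule holomorphic_on_subset) simp
  obtain g where g: "g holomorphic_on q ` V" "\<And>z. z \<in> V \<Longrightarrow> g (q z) = z"
    using holomorphic_has_inverse[OF hol_V V(1,2)] by metis
  show ?thesis
  proof (rule that[of "q ` V" g])
    show "open (q ` V)" by (rule open_mapping_thm3[OF hol_V V(1,2)])
    show "(sin b)\<^sup>2 \<in> q ` V" using V(3) by (simp add: q_def)
    show "continuous_on (q ` V) g" using g(1) by (rule holomorphic_on_imp_continuous_on)
    fix t assume "t \<in> q ` V"
    then obtain z where "z \<in> V" "t = q z" by blast
    then show "dist (g t) b < \<epsilon> \<and> (sin (g t))\<^sup>2 = t"
      using g(2) by (simp add: V_def q_def dist_commute)
  qed
qed

section \<open>Even functions of the square root\<close>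

lemma not_nonpos_Reals_if_norm_diff_1_less: "norm (a - 1) < 1 \<Longrightarrow> (a::complex) \<notin> \<real>\<^sub>\<le>\<^sub>0"
  using abs_Re_le_cmod[of "a - 1"] by (auto simp: complex_nonpos_Reals_iff)

lemma csqrt_square_cases: "csqrt (w\<^sup>2) = w \<or> csqrt (w\<^sup>2) = - w"
  using power2_eq_iff[of "csqrt (w\<^sup>2)" w] by simp

lemma continuous_on_even_csqrt:
  fixes G :: "'a::metric_space \<times> complex \<Rightarrow> 'b::metric_space"
  assumes cont: "continuous_on (D \<times> UNIV) G"
    and even: "\<And>d z. d \<in> D \<Longrightarrow> G (d, - z) = G (d, z)"
  shows "continuous_on (D \<times> UNIV) (\<lambda>p. G (fst p, csqrt (snd p)))"
proof (rule continuous_on_iff[THEN iffD2], intro ballI allI impI)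
  fix p :: "'a \<times> complex" and e :: real
  assume p: "p \<in> D \<times> UNIV" and e: "0 < e"
  define z0 where "z0 = csqrt (snd p)"
  obtain \<delta> where \<delta>: "\<delta> > 0"
    and G_near: "\<And>q. q \<in> D \<times> UNIV \<Longrightarrow> dist q (fst p, z0) < \<delta> \<Longrightarrow> dist (G q) (G (fst p, z0)) < e"
    using cont[unfolded continuous_on_iff, rule_format, of "(fst p, z0)" e] p e by auto
  show "\<exists>\<delta>'>0. \<forall>p'\<in>D \<times> UNIV. dist p' p < \<delta>' \<longrightarrow>
          dist (G (fst p', csqrt (snd p'))) (G (fst p, csqrt (snd p))) < e"
  proof (intro exI[of _ "min (\<delta>/2) ((\<delta>/2)\<^sup>2)"] conjI ballI impI)
    show "0 < min (\<delta>/2) ((\<delta>/2)\<^sup>2)" using \<delta> by simp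
    fix p' assume p': "p' \<in> D \<times> UNIV" and near: "dist p' p < min (\<delta>/2) ((\<delta>/2)\<^sup>2)"
    define w where "w = csqrt (snd p')"
    have "norm (w - z0) * norm (w + z0) = norm (snd p' - snd p)"
      by (simp add: w_def z0_def algebra_simps power2_eq_square[symmetric] flip: norm_mult)
    also have "\<dots> < (\<delta>/2)\<^sup>2"
      using near dist_snd_le[of p' p] by (simp add: dist_norm)
    finally have "norm (w - z0) * norm (w + z0) < (\<delta>/2)\<^sup>2" .
    then have "norm (w - z0) < \<delta>/2 \<or> norm (w + z0) < \<delta>/2"
      using \<delta> mult_mono[of "\<delta>/2" "norm (w - z0)" "\<delta>/2" "norm (w + z0)"]
      by (force simp: power2_eq_square not_less)
    moreover have "norm (- w - z0) = norm (w + z0)"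
      using norm_minus_cancel[of "w + z0"] by (simp add: algebra_simps)
    ultimately have "norm (w - z0) < \<delta>/2 \<or> norm (- w - z0) < \<delta>/2" by simp
    then obtain w' where w': "w' = w \<or> w' = - w" "norm (w' - z0) < \<delta>/2" by blast
    have "dist (fst p', w') (fst p, z0) \<le> dist (fst p') (fst p) + dist w' z0"
      unfolding dist_Pair_Pair by (rule sqrt_sum_squares_le_sum) simp_all
    also have "\<dots> < \<delta>"
      using near dist_fst_le[of p' p] w'(2) by (simp add: dist_norm)
    finally have "dist (G (fst p', w')) (G (fst p, z0)) < e"
      using G_near p' by (simp add: mem_Times_iff)
    moreover have "G (fst p', w') = G (fst p', w)"
      using w'(1) even p' by (auto simp: mem_Times_iff)
    ultimately show "dist (G (fst p', csqrt (snd p'))) (G (fst p, csqrt (snd p))) < e"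
      by (simp add: w_def z0_def)
  qed
qed

lemma continuous_on_even_csqrt_fst:
  fixes G :: "'a::metric_space \<times> complex \<Rightarrow> 'b::metric_space"
  assumes "continuous_on (D \<times> UNIV) G" "\<And>d z. d \<in> D \<Longrightarrow> G (d, - z) = G (d, z)"
  shows "continuous_on (D \<times> UNIV) (\<lambda>q::'a \<times> (complex \<times> 'c::topological_space). G (fst q, csqrt (fst (snd q))))"
proof -
  have "continuous_on (D \<times> UNIV) (\<lambda>q::'a \<times> (complex \<times> 'c). (fst q, fst (snd q)))"
    by (intro continuous_intros)
  moreover have "(\<lambda>q::'a \<times> (complex \<times> 'c). (fst q, fst (snd q))) ` (D \<times> UNIV) \<subseteq> D \<times> UNIV"
    by auto
  ultimately show ?thesis
    using continuous_on_compose2[OF continuous_on_even_csqrt[OF assms]] by fastforce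
qed

section \<open>Lipschitz perturbations of the identity\<close>

locale lipschitz_perturbation =
  fixes \<psi> :: "'a::banach \<Rightarrow> real" and L :: real
  assumes lipschitz: "L-lipschitz_on UNIV \<psi>" and bounded: "\<bar>\<psi> z\<bar> \<le> 1"
begin

definition perturb :: "'a \<Rightarrow> 'a \<Rightarrow> 'a" where
  "perturb d z = z + \<psi> z *\<^sub>R d"

text \<open>Meaningful only when \<open>L * norm d \<le> 1/2\<close>, where \<open>perturb d\<close> is bijective.\<close>
definition unperturb :: "'a \<Rightarrow> 'a \<Rightarrow> 'a" where
  "unperturb d w = (THE z. perturb d z = w)"

lemma norm_scaleR_diff_le:
  assumes "L * norm d \<le> 1/2"
  shows "norm ((\<psi> z - \<psi> w) *\<^sub>R d) \<le> norm (z - w) / 2"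
proof -
  have "norm ((\<psi> z - \<psi> w) *\<^sub>R d) = dist (\<psi> z) (\<psi> w) * norm d"
    by (simp add: dist_real_def)
  also have "\<dots> \<le> L * dist z w * norm d"
    by (intro mult_right_mono lipschitz_onD[OF lipschitz]) auto
  also have "\<dots> \<le> dist z w * (1/2)"
    using mult_left_mono[OF assms, of "dist z w"] by (simp add: algebra_simps)
  finally show ?thesis by (simp add: dist_norm)
qed

lemma norm_perturb_diff_ge:
  assumes "L * norm d \<le> 1/2"
  shows "norm (z - w) / 2 \<le> norm (perturb d z - perturb d w)"
proof -
  have "perturb d z - perturb d w = (z - w) + (\<psi> z - \<psi> w) *\<^sub>R d"
    by (simp add: perturb_def algebra_simps)
  then show ?thesis
    using norm_scaleR_diff_le[OF assms, of z w] norm_diff_ineq[of "z - w" "(\<psi> z - \<psi> w) *\<^sub>R d"]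
    by simp
qed

lemma perturb_inj: "L * norm d \<le> 1/2 \<Longrightarrow> perturb d z = perturb d w \<Longrightarrow> z = w"
  using norm_perturb_diff_ge[of d z w] by simp

lemma perturb_surj:
  assumes "L * norm d \<le> 1/2"
  shows "\<exists>z. perturb d z = w"
proof -
  have "\<exists>!z. w - \<psi> z *\<^sub>R d = z"
  proof (rule banach_fix_type[of "1/2"], safe)
    fix x y
    have "dist (w - \<psi> x *\<^sub>R d) (w - \<psi> y *\<^sub>R d) = norm ((\<psi> y - \<psi> x) *\<^sub>R d)"
      by (simp add: dist_norm scaleR_left_diff_distrib)
    also have "\<dots> \<le> norm (y - x) / 2" by (rule norm_scaleR_diff_le[OF assms])
    finally show "dist (w - \<psi> x *\<^sub>R d) (w - \<psi> y *\<^sub>R d) \<le> 1/2 * dist x y"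
      by (simp add: dist_norm norm_minus_commute)
  qed auto
  then obtain z where "w - \<psi> z *\<^sub>R d = z" by blast
  then have "perturb d z = w" unfolding perturb_def by (metis diff_add_cancel)
  then show ?thesis ..
qed

lemma perturb_unperturb: "L * norm d \<le> 1/2 \<Longrightarrow> perturb d (unperturb d w) = w"
  unfolding unperturb_def by (rule theI') (use perturb_surj perturb_inj in blast)

lemma unperturb_perturb:
  assumes "L * norm d \<le> 1/2"
  shows "unperturb d (perturb d z) = z"
  unfolding unperturb_def by (rule the_equality) (auto dest: perturb_inj[OF assms])

lemma unperturb_lipschitz:
  "4-lipschitz_on ({d. L * norm d \<le> 1/2} \<times> UNIV) (\<lambda>p. unperturb (fst p) (snd p))"
proof (rule lipschitz_onI)
  fix p p' :: "'a \<times> 'a"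
  assume "p \<in> {d. L * norm d \<le> 1/2} \<times> UNIV" "p' \<in> {d. L * norm d \<le> 1/2} \<times> UNIV"
  then obtain d w d' w' where p: "p = (d, w)" "p' = (d', w')"
    and d: "L * norm d \<le> 1/2" and d': "L * norm d' \<le> 1/2"
    by (cases p, cases p') auto
  define z z' where "z = unperturb d w" and "z' = unperturb d' w'"
  have "w = perturb d z" "w' = perturb d' z'"
    using perturb_unperturb[OF d] perturb_unperturb[OF d'] by (simp_all add: z_def z'_def)
  then have "z - z' = (w - w') - (\<psi> z - \<psi> z') *\<^sub>R d - \<psi> z' *\<^sub>R (d - d')"
    by (simp add: perturb_def algebra_simps)
  then have "norm (z - z') \<le> norm (w - w') + norm ((\<psi> z - \<psi> z') *\<^sub>R d) + norm (\<psi> z' *\<^sub>R (d - d'))"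
    by (metis norm_triangle_ineq4 add_right_mono order_trans)
  moreover have "norm (\<psi> z' *\<^sub>R (d - d')) \<le> norm (d - d')"
    using bounded[of z'] by (simp add: mult_left_le_one_le)
  ultimately have "norm (z - z') \<le> 2 * (norm (w - w') + norm (d - d'))"
    using norm_scaleR_diff_le[OF d, of z z'] by argo
  also have "\<dots> \<le> 4 * dist p p'"
    using dist_fst_le[of p p'] dist_snd_le[of p p'] by (simp add: p dist_norm)
  finally show "dist (unperturb (fst p) (snd p)) (unperturb (fst p') (snd p')) \<le> 4 * dist p p'"
    by (simp add: p z_def z'_def dist_norm)
qed simp

lemma continuous_on_unperturb:
  "continuous_on ({d. L * norm d \<le> 1/2} \<times> UNIV) (\<lambda>p. unperturb (fst p) (snd p))"
  by (rule lipschitz_on_continuous_on[OF unperturb_lipschitz])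

lemma isCont_perturb: "isCont (\<lambda>p. perturb (fst p) (snd p)) p"
proof -
  have "isCont \<psi> (snd p)"
    using lipschitz_on_continuous_on[OF lipschitz] by (simp add: continuous_on_eq_continuous_at)
  then have "isCont (\<lambda>q. \<psi> (snd q)) p" by (rule isCont_o2[rotated]) (intro continuous_intros)
  then show ?thesis unfolding perturb_def by (intro continuous_intros)
qed

end

locale sine_perturbation =
  fixes b :: complex and r :: real
  assumes r_pos: "0 < r" and r_le_1: "r \<le> 1"
    and infdist_b: "3 * r \<le> infdist b sin_zeros"
    and infdist_2b: "4 * r \<le> infdist (2 * b) sin_zeros"
begin

definition cutoff :: "real \<Rightarrow> real" where
  "cutoff s = max 0 (min 1 (2 - s / r))"

text \<open>\<open>bump\<close> is \<open>1\<close> within distance \<open>r\<close> of \<open>b + \<pi>\<int>\<close>, \<open>-1\<close> within distance \<open>r\<close> of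
  \<open>-b + \<pi>\<int>\<close> and \<open>0\<close> within distance \<open>r\<close> of \<open>0\<close>; the assumptions on \<open>r\<close> keep these regions apart.\<close>
definition bump :: "complex \<Rightarrow> real" where
  "bump z = cutoff (infdist (z - b) sin_zeros) - cutoff (infdist (z + b) sin_zeros)"

lemma cutoff_diff_le: "\<bar>cutoff s - cutoff s'\<bar> \<le> \<bar>s - s'\<bar> / r"
proof -
  have "\<bar>cutoff s - cutoff s'\<bar> \<le> \<bar>(2 - s/r) - (2 - s'/r)\<bar>"
    unfolding cutoff_def by (auto simp: max_def min_def abs_if)
  also have "\<dots> = \<bar>s - s'\<bar> / r"
    using r_pos by (simp add: diff_divide_distrib[symmetric] abs_minus_commute)
  finally show ?thesis .
qed

lemma cutoff_eq_1: "s \<le> r \<Longrightarrow> cutoff s = 1"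
  unfolding cutoff_def using r_pos by (auto simp: field_simps)

lemma cutoff_eq_0: "2 * r \<le> s \<Longrightarrow> cutoff s = 0"
  unfolding cutoff_def using r_pos by (auto simp: field_simps)

lemma infdist_diff_add_ge: "4 * r \<le> infdist (z - b) sin_zeros + infdist (z + b) sin_zeros"
proof -
  obtain u v where uv: "u \<in> sin_zeros" "v \<in> sin_zeros"
    "infdist (z - b) sin_zeros = dist (z - b) u" "infdist (z + b) sin_zeros = dist (z + b) v"
    using infdist_attains_inf[OF closed_sin_zeros sin_zeros_nonempty] by metis
  have "4 * r \<le> dist (2 * b) (v - u)"
    using infdist_2b infdist_le[OF diff_in_sin_zeros[OF uv(2,1)]] by (rule order_trans)
  also have "\<dots> = norm ((z + b - v) - (z - b - u))"
    unfolding dist_norm by (rule arg_cong[where f=norm]) (simp add: algebra_simps)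
  also have "\<dots> \<le> dist (z + b) v + dist (z - b) u"
    unfolding dist_norm by (rule norm_triangle_ineq4)
  finally show ?thesis using uv by simp
qed

lemma bump_eq_1:
  assumes "infdist (z - b) sin_zeros \<le> r"
  shows "bump z = 1"
proof -
  have "2 * r \<le> infdist (z + b) sin_zeros"
    using assms infdist_diff_add_ge[of z] r_pos by linarith
  then show ?thesis using assms by (simp add: bump_def cutoff_eq_1 cutoff_eq_0)
qed

lemma bump_eq_0:
  assumes "norm z < r"
  shows "bump z = 0"
proof -
  have "infdist b sin_zeros \<le> infdist (z - b) sin_zeros + norm z"
    using infdist_triangle[of "- b" sin_zeros "z - b"]
    by (simp add: infdist_uminus_sin_zeros dist_norm)
  moreover have "infdist b sin_zeros \<le> infdist (z + b) sin_zeros + norm z"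
    using infdist_triangle[of b sin_zeros "z + b"] by (simp add: dist_norm)
  ultimately show ?thesis
    using infdist_b assms by (simp add: bump_def cutoff_eq_0)
qed

lemma bump_uminus: "bump (- z) = - bump z"
proof -
  have "- z - b = - (z + b)" "- z + b = - (z - b)" by simp_all
  then show ?thesis by (simp only: bump_def infdist_uminus_sin_zeros)
qed

lemma cutoff_infdist_diff_le:
  "\<bar>cutoff (infdist (z + c) sin_zeros) - cutoff (infdist (w + c) sin_zeros)\<bar> \<le> dist z w / r"
proof -
  have "\<bar>infdist (z + c) sin_zeros - infdist (w + c) sin_zeros\<bar> \<le> dist z w"
    using infdist_triangle_abs[of "z + c" sin_zeros "w + c"] by (simp add: dist_norm)
  then show ?thesis
    using cutoff_diff_le r_pos by (meson divide_right_mono less_imp_le order_trans)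
qed

lemma bump_lipschitz: "(2/r)-lipschitz_on UNIV bump"
proof (rule lipschitz_onI)
  fix z w :: complex
  show "dist (bump z) (bump w) \<le> 2/r * dist z w"
    using cutoff_infdist_diff_le[of z "- b" w] cutoff_infdist_diff_le[of z b w]
    by (simp add: bump_def dist_real_def)
qed (use r_pos in simp)

lemma abs_bump_le: "\<bar>bump z\<bar> \<le> 1"
  by (simp add: bump_def cutoff_def)

sublocale lipschitz_perturbation bump "2/r"
  by unfold_locales (rule bump_lipschitz, rule abs_bump_le)

lemma small_shift_contraction: "norm d \<le> r/4 \<Longrightarrow> 2/r * norm d \<le> 1/2"
  using r_pos by (simp add: field_simps)

lemma perturb_uminus: "perturb d (- z) = - perturb d z"
  by (simp add: perturb_def bump_uminus)

lemma unperturb_uminus: "norm d \<le> r/4 \<Longrightarrow> unperturb d (- w) = - unperturb d w"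
  by (metis perturb_uminus perturb_unperturb small_shift_contraction unperturb_perturb)

lemma perturb_near_0: "norm z < r \<Longrightarrow> perturb d z = z"
  by (simp add: perturb_def bump_eq_0)

lemma perturb_near_b: "infdist (z - b) sin_zeros \<le> r \<Longrightarrow> perturb d z = z + d"
  by (simp add: perturb_def bump_eq_1)

lemma perturb_eq_0_iff: "norm d \<le> r/4 \<Longrightarrow> perturb d z = 0 \<longleftrightarrow> z = 0"
  using perturb_inj[OF small_shift_contraction, of d z 0] perturb_near_0[of 0 d] r_pos by auto

text \<open>At the zeros of \<open>sin (z - b)\<close> the perturbation is the translation by \<open>d\<close>, so the
  quotient extends by \<open>1\<close>.\<close>
definition shift_quotient :: "complex \<Rightarrow> complex \<Rightarrow> complex" where
  "shift_quotient d z =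
     (if sin (z - b) = 0 then 1 else sin (perturb d z - (b + d)) / sin (z - b))"

lemma shift_quotient_eq_1: "infdist (z - b) sin_zeros \<le> r \<Longrightarrow> shift_quotient d z = 1"
  by (simp add: shift_quotient_def perturb_near_b)

lemma sin_perturb_diff: "sin (perturb d z - (b + d)) = shift_quotient d z * sin (z - b)"
proof (cases "sin (z - b) = 0")
  case True
  then have "infdist (z - b) sin_zeros \<le> r" using r_pos by (simp add: sin_zeros_def)
  then show ?thesis using True by (simp add: perturb_near_b)
qed (simp add: shift_quotient_def)

lemma sin_perturb_add: "sin (perturb d z + (b + d)) = shift_quotient d (- z) * sin (z + b)"
proof -
  have "perturb d (- z) - (b + d) = - (perturb d z + (b + d))" "- z - b = - (z + b)"
    by (simp_all add: perturb_uminus)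
  then have "sin (- (perturb d z + (b + d))) = shift_quotient d (- z) * sin (- (z + b))"
    using sin_perturb_diff[of d "- z"] by (simp only:)
  then show ?thesis by (simp only: sin_minus) simp
qed

text \<open>The perturbation moves the zeros of \<open>sin (z - b)\<close> and \<open>sin (z + b)\<close> onto those of
  \<open>sin (w - (b + d))\<close> and \<open>sin (w + (b + d))\<close>, whence the factorisation.\<close>
lemma sin_squared_perturb:
  "(sin (perturb d z))\<^sup>2 - (sin (b + d))\<^sup>2 =
     shift_quotient d z * shift_quotient d (- z) * ((sin z)\<^sup>2 - (sin b)\<^sup>2)"
  by (simp add: sin_squared_diff sin_perturb_diff sin_perturb_add)

lemma isCont_shift_quotient: "isCont (\<lambda>p. shift_quotient (fst p) (snd p)) p"
proof (cases "sin (snd p - b) = 0")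
  case True
  have "open {q::complex \<times> complex. infdist (snd q - b) sin_zeros < r}"
    by (intro open_Collect_less continuous_intros)
  moreover have "infdist (snd p - b) sin_zeros < r" using True r_pos by (simp add: sin_zeros_def)
  ultimately have "\<forall>\<^sub>F q in nhds p. q \<in> {q. infdist (snd q - b) sin_zeros < r}"
    by (intro eventually_nhds_in_open) simp_all
  then have "\<forall>\<^sub>F q in nhds p. shift_quotient (fst q) (snd q) = 1"
    by eventually_elim (simp add: shift_quotient_eq_1 less_imp_le)
  then show ?thesis by (simp add: isCont_cong)
next
  case False
  have "open {q::complex \<times> complex. sin (snd q - b) \<noteq> 0}"
    by (intro open_Collect_neq continuous_intros)
  then have "\<forall>\<^sub>F q in nhds p. q \<in> {q. sin (snd q - b) \<noteq> 0}"
    using False by (intro eventually_nhds_in_open) simp_all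
  then have "\<forall>\<^sub>F q in nhds p. shift_quotient (fst q) (snd q) =
               sin (perturb (fst q) (snd q) - (b + fst q)) / sin (snd q - b)"
    by eventually_elim (simp add: shift_quotient_def)
  moreover have "isCont (\<lambda>q. sin (perturb (fst q) (snd q) - (b + fst q)) / sin (snd q - b)) p"
    using False by (intro continuous_intros isCont_perturb) auto
  ultimately show ?thesis by (simp add: isCont_cong)
qed

lemma obtain_shift_quotient_close_to_1:
  obtains \<eta> where "0 < \<eta>" "\<eta> \<le> r/4" "\<And>d z. norm d < \<eta> \<Longrightarrow> norm (shift_quotient d z - 1) < 1"
proof -
  define g where "g e = norm (cos e - 1) + (1 + 1 / (r/4)) * norm (sin e)" for e :: complex
  have "isCont g 0" unfolding g_def by (intro continuous_intros)
  then obtain \<delta> where "\<delta> > 0" and g_small: "\<And>e. dist e 0 < \<delta> \<Longrightarrow> dist (g e) (g 0) < 1"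
    unfolding continuous_at_eps_delta by (meson zero_less_one)
  define \<eta> where "\<eta> = min (r/4) (\<delta>/2)"
  have "norm (shift_quotient d z - 1) < 1" if d: "norm d < \<eta>" for d z
  proof (cases "infdist (z - b) sin_zeros \<le> r")
    case True
    then show ?thesis by (simp add: shift_quotient_eq_1)
  next
    case False
    define e where "e = (bump z - 1) *\<^sub>R d"
    have "norm e \<le> 2 * norm d"
      using abs_bump_le[of z] by (simp add: e_def mult_right_mono)
    then have "g e < 1" using g_small[of e] d by (simp add: g_def \<eta>_def)
    moreover have "sin (z - b) \<noteq> 0" using False r_pos by (auto simp: sin_zeros_def)
    then have "shift_quotient d z = sin (z - b + e) / sin (z - b)"
      by (simp add: shift_quotient_def perturb_def e_def algebra_simps)
    moreover have "r/4 \<le> norm (sin (z - b))"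
      using False r_pos r_le_1 by (intro norm_sin_ge_infdist) auto
    ultimately show ?thesis
      using norm_sin_add_div_sin_minus_1_le[of "r/4" "z - b" e] r_pos by (simp add: g_def)
  qed
  moreover have "0 < \<eta>" "\<eta> \<le> r/4" using r_pos \<open>\<delta> > 0\<close> by (auto simp: \<eta>_def)
  ultimately show ?thesis using that by blast
qed

end

section \<open>Transport between the fibres\<close>

definition f_pow :: "nat \<Rightarrow> complex \<times> complex \<Rightarrow> complex" where
  "f_pow k p = (sin (csqrt (fst p)))\<^sup>2 - fst p ^ k * (snd p)\<^sup>2"

lemma continuous_on_f_pow: "continuous_on UNIV (f_pow k)"
proof -
  have "continuous_on (UNIV \<times> UNIV) (\<lambda>p::complex \<times> complex. (sin (snd p))\<^sup>2)"
    by (intro continuous_intros)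
  from continuous_on_even_csqrt[OF this]
  have sin_csqrt: "continuous_on (UNIV \<times> UNIV) (\<lambda>p::complex \<times> complex. (sin (csqrt (snd p)))\<^sup>2)"
    by simp
  have "continuous_on UNIV (\<lambda>p::complex \<times> complex. (0::complex, fst p))"
    by (intro continuous_intros)
  from continuous_on_compose2[OF sin_csqrt this]
  have "continuous_on UNIV (\<lambda>p::complex \<times> complex. (sin (csqrt (fst p)))\<^sup>2)"
    by simp
  then show ?thesis
    unfolding f_pow_def by (intro continuous_on_diff) (auto intro!: continuous_intros)
qed

locale sine_transport = sine_perturbation +
  fixes \<eta> :: real and k :: nat
  assumes \<eta>_pos: "0 < \<eta>" and \<eta>_le: "\<eta> \<le> r/4"
    and shift_quotient_close: "norm d < \<eta> \<Longrightarrow> norm (shift_quotient d z - 1) < 1"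
begin

lemma small_shift_if_less: "norm d < \<eta> \<Longrightarrow> norm d \<le> r/4"
  using \<eta>_le by simp

text \<open>The square roots are taken of numbers within distance \<open>1\<close> of \<open>1\<close>, away from the branch
  cut of \<open>csqrt\<close>.\<close>
definition root_quotient :: "complex \<Rightarrow> complex \<Rightarrow> complex" where
  "root_quotient d z = csqrt (shift_quotient d z) * csqrt (shift_quotient d (- z))"

definition ratio :: "complex \<Rightarrow> complex \<Rightarrow> complex" where
  "ratio d z = (if z = 0 then 1 else z / perturb d z)"

definition multiplier :: "complex \<Rightarrow> complex \<Rightarrow> complex" where
  "multiplier d z = root_quotient d z * ratio d z ^ k"

lemma multiplier_uminus: "multiplier d (- z) = multiplier d z"
  by (simp add: multiplier_def root_quotient_def ratio_def perturb_uminus mult.commute)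

lemma multiplier_nonzero: "norm d < \<eta> \<Longrightarrow> multiplier d z \<noteq> 0"
  using shift_quotient_close[of d z] shift_quotient_close[of d "- z"]
    perturb_eq_0_iff[OF small_shift_if_less, of d z]
  by (auto simp: multiplier_def root_quotient_def ratio_def)

lemma perturb_mult_ratio: "norm d \<le> r/4 \<Longrightarrow> perturb d z * ratio d z = z"
  using perturb_eq_0_iff[of d z] perturb_eq_0_iff[of d 0] by (simp add: ratio_def)

lemma perturb_multiplier_squared:
  assumes "norm d < \<eta>"
  shows "((perturb d z)\<^sup>2) ^ k * (multiplier d z)\<^sup>2 =
           shift_quotient d z * shift_quotient d (- z) * (z\<^sup>2) ^ k"
proof -
  have "((perturb d z)\<^sup>2) ^ k * (multiplier d z)\<^sup>2 =
          (root_quotient d z)\<^sup>2 * ((perturb d z * ratio d z)\<^sup>2) ^ k"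
    by (simp add: multiplier_def power_mult_distrib flip: power_mult) (simp add: mult.commute)
  then show ?thesis
    using perturb_mult_ratio[OF small_shift_if_less[OF assms]]
    by (simp add: root_quotient_def power_mult_distrib)
qed

lemma isCont_root_quotient:
  assumes "norm (fst p) < \<eta>"
  shows "isCont (\<lambda>p. root_quotient (fst p) (snd p)) p"
proof -
  have "isCont (\<lambda>q. (fst q, - snd q)) p" by (intro continuous_intros)
  from isCont_o2[OF this isCont_shift_quotient]
  have "isCont (\<lambda>q. shift_quotient (fst q) (- snd q)) p" by simp
  then show ?thesis unfolding root_quotient_def
    using assms
    by (intro continuous_intros isCont_csqrt' isCont_shift_quotient
        not_nonpos_Reals_if_norm_diff_1_less shift_quotient_close)
qed

lemma isCont_ratio:
  assumes "norm (fst p) < \<eta>"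
  shows "isCont (\<lambda>p. ratio (fst p) (snd p)) p"
proof (cases "snd p = 0")
  case True
  have "open {q::complex \<times> complex. norm (snd q) < r}"
    by (intro open_Collect_less continuous_intros)
  then have "\<forall>\<^sub>F q in nhds p. q \<in> {q. norm (snd q) < r}"
    using True r_pos by (intro eventually_nhds_in_open) simp_all
  then have "\<forall>\<^sub>F q in nhds p. ratio (fst q) (snd q) = 1"
    by eventually_elim (simp add: ratio_def perturb_near_0)
  then show ?thesis by (simp add: isCont_cong)
next
  case False
  have "open {q::complex \<times> complex. snd q \<noteq> 0}"
    by (intro open_Collect_neq continuous_intros)
  then have "\<forall>\<^sub>F q in nhds p. q \<in> {q. snd q \<noteq> 0}"
    using False by (intro eventually_nhds_in_open) simp_all
  then have "\<forall>\<^sub>F q in nhds p. ratio (fst q) (snd q) = snd q / perturb (fst q) (snd q)"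
    by eventually_elim (simp add: ratio_def)
  moreover have "perturb (fst p) (snd p) \<noteq> 0"
    using False perturb_eq_0_iff[OF small_shift_if_less[OF assms]] by simp
  then have "isCont (\<lambda>q. snd q / perturb (fst q) (snd q)) p"
    by (intro continuous_intros isCont_perturb)
  ultimately show ?thesis by (simp add: isCont_cong)
qed

lemma continuous_on_multiplier:
  "continuous_on (ball 0 \<eta> \<times> UNIV) (\<lambda>p. multiplier (fst p) (snd p))"
  unfolding multiplier_def
  by (auto simp: continuous_on_eq_continuous_at open_Times mem_Times_iff
      intro!: continuous_intros isCont_root_quotient isCont_ratio)

text \<open>Only even functions of \<open>csqrt x\<close> occur, so the choice of square root is immaterial.\<close>
definition transport :: "complex \<Rightarrow> complex \<times> complex \<Rightarrow> complex \<times> complex" where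
  "transport d p = ((perturb d (csqrt (fst p)))\<^sup>2, snd p * multiplier d (csqrt (fst p)))"

definition transport_inv :: "complex \<Rightarrow> complex \<times> complex \<Rightarrow> complex \<times> complex" where
  "transport_inv d p =
     ((unperturb d (csqrt (fst p)))\<^sup>2, snd p / multiplier d (unperturb d (csqrt (fst p))))"

lemma transport_inv_transport:
  assumes "norm d < \<eta>"
  shows "transport_inv d (transport d p) = p"
proof -
  have d: "norm d \<le> r/4" using small_shift_if_less[OF assms] .
  define z where "z = csqrt (fst p)"
  obtain z' where z': "z' = z \<or> z' = - z" "csqrt ((perturb d z)\<^sup>2) = perturb d z'"
    using csqrt_square_cases[of "perturb d z"] perturb_uminus[of d z] by metis
  have "unperturb d (csqrt ((perturb d z)\<^sup>2)) = z'"
    using z'(2) unperturb_perturb[OF small_shift_contraction[OF d]] by simp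
  moreover have "z'\<^sup>2 = fst p" "multiplier d z' = multiplier d z"
    using z'(1) multiplier_uminus by (auto simp: z_def)
  ultimately show ?thesis
    using multiplier_nonzero[OF assms, of z] by (simp add: transport_def transport_inv_def flip: z_def)
qed

lemma transport_transport_inv:
  assumes "norm d < \<eta>"
  shows "transport d (transport_inv d p) = p"
proof -
  have d: "norm d \<le> r/4" using small_shift_if_less[OF assms] .
  define w where "w = unperturb d (csqrt (fst p))"
  obtain w' where w': "w' = w \<or> w' = - w" "csqrt (w\<^sup>2) = w'"
    using csqrt_square_cases[of w] by metis
  have "perturb d w = csqrt (fst p)"
    using perturb_unperturb[OF small_shift_contraction[OF d]] by (simp add: w_def)
  then have "(perturb d w')\<^sup>2 = fst p" using w'(1) perturb_uminus[of d w] by auto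
  moreover have "multiplier d w' = multiplier d w" using w'(1) multiplier_uminus by auto
  ultimately show ?thesis
    using multiplier_nonzero[OF assms, of w] by (simp add: transport_def transport_inv_def w'(2) flip: w_def)
qed

lemma f_pow_transport:
  assumes "norm d < \<eta>"
  shows "f_pow k (transport d p) - (sin (b + d))\<^sup>2 =
           shift_quotient d (csqrt (fst p)) * shift_quotient d (- csqrt (fst p)) * (f_pow k p - (sin b)\<^sup>2)"
proof -
  define z where "z = csqrt (fst p)"
  have "(sin (csqrt ((perturb d z)\<^sup>2)))\<^sup>2 = (sin (perturb d z))\<^sup>2"
    using csqrt_square_cases[of "perturb d z"] by (metis sin_minus power2_minus)
  moreover have "z\<^sup>2 = fst p" by (simp add: z_def)
  ultimately show ?thesis
    using sin_squared_perturb[of d z] perturb_multiplier_squared[OF assms, of z]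
    by (simp add: f_pow_def transport_def algebra_simps power_mult_distrib flip: z_def)
qed

lemma f_pow_transport_eq_iff:
  assumes "norm d < \<eta>"
  shows "f_pow k (transport d p) = (sin (b + d))\<^sup>2 \<longleftrightarrow> f_pow k p = (sin b)\<^sup>2"
  using f_pow_transport[OF assms, of p] shift_quotient_close[OF assms, of "csqrt (fst p)"]
    shift_quotient_close[OF assms, of "- csqrt (fst p)"]
  by (auto simp: right_minus_eq)

lemma continuous_on_transport:
  "continuous_on (ball 0 \<eta> \<times> UNIV) (\<lambda>q. transport (fst q) (snd q))"
proof -
  have "continuous_on (ball 0 \<eta> \<times> UNIV) (\<lambda>p. (perturb (fst p) (snd p))\<^sup>2)"
    by (intro continuous_intros continuous_at_imp_continuous_on ballI isCont_perturb)
  from continuous_on_even_csqrt_fst[OF this]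
  have "continuous_on (ball 0 \<eta> \<times> UNIV)
          (\<lambda>q::complex \<times> complex \<times> complex. (perturb (fst q) (csqrt (fst (snd q))))\<^sup>2)"
    by (simp add: perturb_uminus)
  moreover have "continuous_on (ball 0 \<eta> \<times> UNIV)
          (\<lambda>q::complex \<times> complex \<times> complex. multiplier (fst q) (csqrt (fst (snd q))))"
    using continuous_on_even_csqrt_fst[OF continuous_on_multiplier] by (simp add: multiplier_uminus)
  moreover have "continuous_on (ball 0 \<eta> \<times> UNIV) (\<lambda>q::complex \<times> complex \<times> complex. snd (snd q))"
    by (intro continuous_intros)
  ultimately show ?thesis
    unfolding transport_def by (intro continuous_on_Pair continuous_on_mult)
qed

lemma continuous_on_transport_inv:
  "continuous_on (ball 0 \<eta> \<times> UNIV) (\<lambda>q. transport_inv (fst q) (snd q))"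
proof -
  have ball_small: "ball 0 \<eta> \<times> UNIV \<subseteq> {d. 2/r * norm d \<le> 1/2} \<times> UNIV"
    using small_shift_contraction[OF small_shift_if_less] by (auto simp: mem_Times_iff)
  have unperturb: "continuous_on (ball 0 \<eta> \<times> UNIV) (\<lambda>p. unperturb (fst p) (snd p))"
    using continuous_on_unperturb ball_small by (rule continuous_on_subset)
  have odd: "unperturb d (- z) = - unperturb d z" if "d \<in> ball 0 \<eta>" for d z
    using that unperturb_uminus[OF small_shift_if_less] by simp
  have "continuous_on (ball 0 \<eta> \<times> UNIV) (\<lambda>p. (unperturb (fst p) (snd p))\<^sup>2)"
    by (intro continuous_intros unperturb)
  from continuous_on_even_csqrt_fst[OF this]
  have "continuous_on (ball 0 \<eta> \<times> UNIV)
          (\<lambda>q::complex \<times> complex \<times> complex. (unperturb (fst q) (csqrt (fst (snd q))))\<^sup>2)"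
    using odd by simp
  moreover have "continuous_on (ball 0 \<eta> \<times> UNIV)
      (\<lambda>p. multiplier (fst (fst p, unperturb (fst p) (snd p))) (snd (fst p, unperturb (fst p) (snd p))))"
    by (rule continuous_on_compose2[OF continuous_on_multiplier])
      (auto intro!: continuous_intros unperturb)
  from continuous_on_even_csqrt_fst[OF this[simplified]]
  have "continuous_on (ball 0 \<eta> \<times> UNIV)
          (\<lambda>q::complex \<times> complex \<times> complex. multiplier (fst q) (unperturb (fst q) (csqrt (fst (snd q)))))"
    using odd by (simp add: multiplier_uminus)
  moreover have "continuous_on (ball 0 \<eta> \<times> UNIV) (\<lambda>q::complex \<times> complex \<times> complex. snd (snd q))"
    by (intro continuous_intros)
  moreover have "\<forall>q\<in>ball 0 \<eta> \<times> UNIV. multiplier (fst q) (unperturb (fst q) (csqrt (fst (snd q)))) \<noteq> 0"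
    using multiplier_nonzero by (auto simp: mem_Times_iff)
  ultimately show ?thesis
    unfolding transport_inv_def by (intro continuous_on_Pair continuous_on_divide)
qed

lemma transport_family:
  assumes "continuous_on U \<delta>" and small: "\<And>t. t \<in> U \<Longrightarrow> norm (\<delta> t) < \<eta>"
    and inverse: "\<And>t. t \<in> U \<Longrightarrow> (sin (b + \<delta> t))\<^sup>2 = t"
  shows "continuous_on (U \<times> UNIV) (\<lambda>q. transport (\<delta> (fst q)) (snd q))"
    and "continuous_on (U \<times> UNIV) (\<lambda>q. transport_inv (\<delta> (fst q)) (snd q))"
    and "\<forall>t\<in>U. \<forall>p. transport (\<delta> t) (transport_inv (\<delta> t) p) = p \<and>
           transport_inv (\<delta> t) (transport (\<delta> t) p) = p \<and>
           (f_pow k (transport (\<delta> t) p) = t \<longleftrightarrow> f_pow k p = (sin b)\<^sup>2)"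
proof -
  have "continuous_on (U \<times> UNIV) (\<lambda>q::complex \<times> complex \<times> complex. (\<delta> (fst q), snd q))"
    by (intro continuous_intros continuous_on_compose2[OF assms(1) continuous_on_fst]) auto
  moreover have "(\<lambda>q. (\<delta> (fst q), snd q)) ` (U \<times> UNIV) \<subseteq> ball 0 \<eta> \<times> UNIV"
    using small by auto
  ultimately show "continuous_on (U \<times> UNIV) (\<lambda>q. transport (\<delta> (fst q)) (snd q))"
    "continuous_on (U \<times> UNIV) (\<lambda>q. transport_inv (\<delta> (fst q)) (snd q))"
    using continuous_on_compose2[OF continuous_on_transport]
      continuous_on_compose2[OF continuous_on_transport_inv] by fastforce+
  show "\<forall>t\<in>U. \<forall>p. transport (\<delta> t) (transport_inv (\<delta> t) p) = p \<and>
           transport_inv (\<delta> t) (transport (\<delta> t) p) = p \<and>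
           (f_pow k (transport (\<delta> t) p) = t \<longleftrightarrow> f_pow k p = (sin b)\<^sup>2)"
  proof (intro ballI allI conjI)
    fix t p assume "t \<in> U"
    then show "transport (\<delta> t) (transport_inv (\<delta> t) p) = p"
      "transport_inv (\<delta> t) (transport (\<delta> t) p) = p"
      using small transport_transport_inv transport_inv_transport by simp_all
    show "f_pow k (transport (\<delta> t) p) = t \<longleftrightarrow> f_pow k p = (sin b)\<^sup>2"
      using f_pow_transport_eq_iff[OF small, of t p] inverse \<open>t \<in> U\<close> by simp
  qed
qed

end

lemma (in sine_perturbation) obtain_sine_transport:
  obtains \<eta> where "sine_transport b r \<eta>"
proof -
  obtain \<eta> where "0 < \<eta>" "\<eta> \<le> r/4" "\<And>d z. norm d < \<eta> \<Longrightarrow> norm (shift_quotient d z - 1) < 1"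
    by (rule obtain_shift_quotient_close_to_1) blast
  then have "sine_transport b r \<eta>"
    by (intro sine_transport.intro sine_perturbation_axioms sine_transport_axioms.intro)
  then show ?thesis by (rule that)
qed

section \<open>Local triviality\<close>

lemma obtain_sine_perturbation:
  assumes "sin b * cos b \<noteq> 0"
  obtains r where "sine_perturbation b r"
proof -
  have "b \<notin> sin_zeros" "2 * b \<notin> sin_zeros" using assms by (auto simp: sin_zeros_def sin_double)
  then have pos: "0 < infdist b sin_zeros" "0 < infdist (2 * b) sin_zeros"
    by (auto intro: infdist_pos_not_in_closed[OF closed_sin_zeros sin_zeros_nonempty])
  show ?thesis
    by (rule that[of "min 1 (min (infdist b sin_zeros / 3) (infdist (2 * b) sin_zeros / 4))"])
      (unfold_locales, use pos in auto)
qed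

theorem locally_trivial_fibration_f_pow:
  "locally_trivial_fibration (f_pow k) (f_pow k -` (UNIV - {0, 1})) (UNIV - {0, 1})"
proof (rule locally_trivial_fibrationI)
  show "continuous_on (f_pow k -` (UNIV - {0, 1})) (f_pow k)"
    using continuous_on_f_pow by (rule continuous_on_subset) simp
  fix t0 :: complex
  assume t0: "t0 \<in> UNIV - {0, 1}"
  define b where "b = Arcsin (csqrt t0)"
  have sin_b: "(sin b)\<^sup>2 = t0" by (simp add: b_def)
  have "sin b * cos b \<noteq> 0"
    using t0 sin_b sin_cos_squared_add[of b] by auto
  then obtain r where "sine_perturbation b r" by (rule obtain_sine_perturbation)
  then interpret sine_perturbation b r .
  obtain \<eta> where "sine_transport b r \<eta>" by (rule obtain_sine_transport)
  then interpret sine_transport b r \<eta> k .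
  obtain V g where V: "open V" "t0 \<in> V" "continuous_on V g"
    and g: "\<And>t. t \<in> V \<Longrightarrow> dist (g t) b < \<eta> \<and> (sin (g t))\<^sup>2 = t"
    using sin_squared_local_inverse[OF \<open>sin b * cos b \<noteq> 0\<close> \<eta>_pos] sin_b by metis
  define U where "U = V - {0, 1}"
  define \<delta> where "\<delta> t = g t - b" for t
  have \<delta>_cont: "continuous_on U \<delta>"
    unfolding \<delta>_def U_def by (intro continuous_intros continuous_on_subset[OF V(3)]) auto
  have \<delta>_small: "norm (\<delta> t) < \<eta>" and \<delta>_inverse: "(sin (b + \<delta> t))\<^sup>2 = t" if "t \<in> U" for t
    using g[of t] that by (auto simp: U_def \<delta>_def dist_norm)
  note family = transport_family[OF \<delta>_cont \<delta>_small \<delta>_inverse]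
  have "open U" "t0 \<in> U" "U \<subseteq> UNIV - {0, 1}" using V t0 by (auto simp: U_def)
  then show "\<exists>U T T'. open U \<and> t0 \<in> U \<and> U \<subseteq> UNIV - {0, 1} \<and>
      continuous_on (U \<times> UNIV) (\<lambda>q. T (fst q) (snd q)) \<and>
      continuous_on (U \<times> UNIV) (\<lambda>q. T' (fst q) (snd q)) \<and>
      (\<forall>t\<in>U. \<forall>p. T t (T' t p) = p \<and> T' t (T t p) = p \<and> (f_pow k (T t p) = t \<longleftrightarrow> f_pow k p = t0))"
    using family sin_b
    by (intro exI[of _ U] exI[of _ "\<lambda>t. transport (\<delta> t)"] exI[of _ "\<lambda>t. transport_inv (\<delta> t)"])
      simp
qed

lemma x_mult_s_fun_squared: "x * (s_fun x)\<^sup>2 = (sin (csqrt x))\<^sup>2"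
  by (cases "x = 0") (simp_all add: s_fun_def power_divide)

lemma f_A_eq_f_pow: "f_A = f_pow 0"
  by (simp add: fun_eq_iff f_A_def f_pow_def x_mult_s_fun_squared)

lemma f_D_eq_f_pow: "f_D = f_pow 1"
  by (simp add: fun_eq_iff f_D_def f_pow_def x_mult_s_fun_squared algebra_simps)

theorem theorem3:
  assumes "f \<in> {f_A, f_D}"
  shows "locally_trivial_fibration f (UNIV - (f -` {0} \<union> f -` {1})) (UNIV - {0, 1})"
proof -
  obtain k where "f = f_pow k" using assms f_A_eq_f_pow f_D_eq_f_pow by auto
  moreover have "UNIV - (f -` {0} \<union> f -` {1}) = f -` (UNIV - {0, 1})" by auto
  ultimately show ?thesis using locally_trivial_fibration_f_pow by simp
qed

end
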